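(* Let $m\ge 1$ be an integer and let $G^m$ be the graph obtained as follows: take $m$ disjoint copies $F_1,\dots,F_m$ of the graph $F$, denoting by $x_s,x'_s$ the copies of $x,x'$ in $F_s$; for $s=1,\dots,m-1$ identify $x'_s$ with $x_{s+1}$ and call the resulting vertex $w_{s+1}$; finally identify $x_1$ with $x'_m$ and call the resulting vertex $w_1$. Then $G^m$ has an acyclic $(\mathcal{S}_3,\mathcal{S}_3)$-colouring, and in every acyclic $(\mathcal{S}_3,\mathcal{S}_3)$-colouring of $G^m$ the vertices $w_1,\dots,w_m$ all have the same colour and each $w_s$ is $3$-saturated.
   Context: $F$ is the graph with vertex set $\{a,b,c,d,e,g,h,i,x,x'\}$ and edge set $\{de,\ da,\ ae,\ dc,\ ec,\ ac,\ eg,\ cg,\ db,\ ab,\ cb,\ gb,\ ex',\ bx',\ di,\ ix,\ ah,\ hx\}$. An acyclic $(\mathcal{S}_3,\mathcal{S}_3)$-colouring of a graph $G$ is a map $c:V(G)\to\{1,2\}$ (not necessarily proper) such that each of the two colour classes induces a subgraph of maximum degree at most $3$, and there is no cycle in $G$ every edge of which joins a vertex of colour $1$ to a vertex of colour $2$. A vertex $v$ is $3$-saturated if exactly $3$ of its neighbours have colour $c(v)$. *)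

theory Defs
  imports Main
begin

definition adj :: "'a set set \<Rightarrow> 'a \<Rightarrow> 'a \<Rightarrow> bool" where
  "adj E u v \<longleftrightarrow> {u, v} \<in> E \<and> u \<noteq> v"

definition is_cycle :: "'a set \<Rightarrow> 'a set set \<Rightarrow> 'a list \<Rightarrow> bool" where
  "is_cycle V E cs \<longleftrightarrow> length cs \<ge> 3 \<and> distinct cs \<and> set cs \<subseteq> V \<and>
     (\<forall>i < length cs. adj E (cs ! i) (cs ! ((i + 1) mod length cs)))"

definition same_deg :: "'a set \<Rightarrow> 'a set set \<Rightarrow> ('a \<Rightarrow> nat) \<Rightarrow> 'a \<Rightarrow> nat" where
  "same_deg V E c v = card {u \<in> V. adj E v u \<and> c u = c v}"

definition acyclic_S3S3_colouring :: "'a set \<Rightarrow> 'a set set \<Rightarrow> ('a \<Rightarrow> nat) \<Rightarrow> bool" where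
  "acyclic_S3S3_colouring V E c \<longleftrightarrow>
     (\<forall>v \<in> V. c v \<in> {1, 2}) \<and>
     (\<forall>v \<in> V. same_deg V E c v \<le> 3) \<and>
     \<not> (\<exists>cs. is_cycle V E cs \<and>
            (\<forall>i < length cs. c (cs ! i) \<noteq> c (cs ! ((i + 1) mod length cs))))"

definition saturated3 :: "'a set \<Rightarrow> 'a set set \<Rightarrow> ('a \<Rightarrow> nat) \<Rightarrow> 'a \<Rightarrow> bool" where
  "saturated3 V E c v \<longleftrightarrow> same_deg V E c v = 3"

datatype fv = Fa | Fb | Fc | Fd | Fe | Fg | Fh | Fi | Fx | Fx'

definition F_edges :: "(fv \<times> fv) list" where
  "F_edges = [(Fd,Fe),(Fd,Fa),(Fa,Fe),(Fd,Fc),(Fe,Fc),(Fa,Fc),(Fe,Fg),(Fc,Fg),(Fd,Fb),(Fa,Fb),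
              (Fc,Fb),(Fg,Fb),(Fe,Fx'),(Fb,Fx'),(Fd,Fi),(Fi,Fx),(Fa,Fh),(Fh,Fx)]"

(* G^m: copies indexed s = 0..m-1 (copy F_{s+1} in the paper).  Vertex (s,v) is the copy of v in
   F_{s+1}; the copy of x' in F_{s+1} is identified with the copy of x in F_{s+2} (indices mod m),
   so canonical representatives never use Fx'.  w_{s+1} is the vertex (s, Fx). *)
definition canon :: "nat \<Rightarrow> nat \<Rightarrow> fv \<Rightarrow> nat \<times> fv" where
  "canon m s v = (if v = Fx' then ((s + 1) mod m, Fx) else (s, v))"

definition Gm_V :: "nat \<Rightarrow> (nat \<times> fv) set" where
  "Gm_V m = {(s, v). s < m \<and> v \<noteq> Fx'}"

definition Gm_E :: "nat \<Rightarrow> (nat \<times> fv) set set" where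
  "Gm_E m = {{canon m s u, canon m s v} | s u v. s < m \<and> (u, v) \<in> set F_edges}"

definition w :: "nat \<Rightarrow> nat \<times> fv" where
  "w s = (s - 1, Fx)"

end

theory Submission
  imports Defs
begin

text \<open>
  In an acyclic (S_3,S_3)-colouring the colouring of every copy of F is forced. The cliques
  {a,c,d,e} and {a,b,c,d} cannot be split 2+2, which would give an alternating 4-cycle; together
  with the degree bound this makes the triangle acd monochromatic, of colour alpha say. Degree bounds
  at a, d, b, e and the 4-cycle abde then show that exactly one of b, e has colour alpha and that
  h, i, x' do not, and the 6-cycles ahxidb, ahxide show that x does not either. Hence x and x' of a
  copy have the same colour, so all w_s do, and the neighbours of w_s sharing its colour are h and i
  of its own copy and exactly one of e, b of the preceding copy.

  Conversely, colouring a, b, c, d of every copy with 1 and all other vertices with 2 works: the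
  bichromatic edges form a forest, which can be peeled from the leaves h, i, x inwards.
\<close>

section \<open>Alternating cycles and same-coloured neighbours\<close>

lemma adj_sym: "adj E u v \<Longrightarrow> adj E v u"
  by (auto simp: adj_def insert_commute)

lemma no_alternating_cycle:
  assumes "acyclic_S3S3_colouring V E c" "is_cycle V E cs"
  shows "\<exists>i < length cs. c (cs ! i) = c (cs ! ((i + 1) mod length cs))"
  using assms unfolding acyclic_S3S3_colouring_def by blast

lemma same_colour_nbrs_card_le:
  assumes "acyclic_S3S3_colouring V E c" "finite V" "v \<in> V"
    and "U \<subseteq> V" "\<And>u. u \<in> U \<Longrightarrow> adj E v u \<and> c u = c v"
  shows "card U \<le> 3"
proof -
  have "card U \<le> same_deg V E c v"
    unfolding same_deg_def using assms(2,4,5) by (intro card_mono) auto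
  also have "\<dots> \<le> 3"
    using assms(1,3) unfolding acyclic_S3S3_colouring_def by blast
  finally show ?thesis .
qed

lemma mod_Suc_neq_mod_pred:
  assumes "3 \<le> n" "i < n"
  shows "Suc i mod n \<noteq> (i + n - 1) mod n"
proof (cases "i = 0")
  case False
  then have "(i + n - 1) mod n = i - 1"
    using assms by (simp add: mod_if)
  moreover have "Suc i mod n = (if Suc i = n then 0 else Suc i)"
    using assms by simp
  ultimately show ?thesis
    using assms False by auto
qed (use assms in simp)

lemma bichromatic_cycle_nbrs:
  assumes cycle: "is_cycle V E cs"
    and bichromatic: "\<forall>i < length cs. c (cs ! i) \<noteq> c (cs ! ((i + 1) mod length cs))"
    and "v \<in> set cs"
  obtains u u' where "u \<in> set cs" "u' \<in> set cs" "u \<noteq> u'"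
    "adj E v u" "adj E v u'" "c u \<noteq> c v" "c u' \<noteq> c v"
proof -
  let ?n = "length cs"
  have n: "3 \<le> ?n" and dist: "distinct cs"
    and steps: "\<forall>i < ?n. adj E (cs ! i) (cs ! ((i + 1) mod ?n))"
    using cycle unfolding is_cycle_def by auto
  obtain i where i: "i < ?n" "v = cs ! i"
    using \<open>v \<in> set cs\<close> by (auto simp: in_set_conv_nth)
  define j where "j = (i + ?n - 1) mod ?n"
  have pos: "0 < ?n"
    using n by linarith
  have j: "j < ?n" and next_i: "(i + 1) mod ?n < ?n"
    using pos by (simp_all add: j_def)
  have "(j + 1) mod ?n = (i + ?n - 1 + 1) mod ?n"
    by (simp only: j_def mod_add_left_eq)
  also have "i + ?n - 1 + 1 = i + ?n"
    using pos by linarith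
  finally have j_next: "(j + 1) mod ?n = i"
    using i by simp
  have "cs ! ((i + 1) mod ?n) \<noteq> cs ! j"
    using mod_Suc_neq_mod_pred[OF n i(1)] nth_eq_iff_index_eq[OF dist next_i j]
    by (simp add: j_def)
  moreover have "adj E v (cs ! ((i + 1) mod ?n))" "c (cs ! ((i + 1) mod ?n)) \<noteq> c v"
    using steps bichromatic i by auto
  moreover have "adj E v (cs ! j)" "c (cs ! j) \<noteq> c v"
    using steps[rule_format, OF j] bichromatic[rule_format, OF j] i j_next
    by (auto intro: adj_sym)
  ultimately show ?thesis
    using that nth_mem[OF next_i] nth_mem[OF j] by blast
qed

section \<open>Copies of F in G^m\<close>

definition F_adj :: "fv \<Rightarrow> fv \<Rightarrow> bool" where
  "F_adj u v \<longleftrightarrow> (u, v) \<in> set F_edges \<or> (v, u) \<in> set F_edges"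

lemma F_adj_not_both_x_x': "\<not> (F_adj v Fx \<and> F_adj v Fx')"
  by (cases v) (auto simp: F_adj_def F_edges_def)

lemma canon_neq:
  assumes "u \<noteq> v" "{u, v} \<noteq> {Fx, Fx'}"
  shows "canon m s u \<noteq> canon m s v"
  using assms by (auto simp: canon_def)

lemma canon_in_Gm_V: "s < m \<Longrightarrow> canon m s v \<in> Gm_V m"
  by (simp add: canon_def Gm_V_def)

lemma finite_Gm_V: "finite (Gm_V m)"
proof -
  have "Gm_V m \<subseteq> {..<m} \<times> UNIV"
    by (auto simp: Gm_V_def)
  moreover have "(UNIV :: fv set) = {Fa, Fb, Fc, Fd, Fe, Fg, Fh, Fi, Fx, Fx'}"
  proof (rule UNIV_eq_I)
    show "v \<in> {Fa, Fb, Fc, Fd, Fe, Fg, Fh, Fi, Fx, Fx'}" for v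
      by (cases v) auto
  qed
  ultimately show ?thesis
    by (metis finite.emptyI finite_insert finite_SigmaI finite_lessThan finite_subset)
qed

lemma adj_canon:
  assumes "s < m" "F_adj u v"
  shows "adj (Gm_E m) (canon m s u) (canon m s v)"
proof -
  have "u \<noteq> v" "{u, v} \<noteq> {Fx, Fx'}"
    using assms(2) by (auto simp: F_adj_def F_edges_def doubleton_eq_iff)
  then show ?thesis
    using assms unfolding adj_def Gm_E_def F_adj_def
    by (auto simp: canon_neq insert_commute)
qed

lemma copy_colour_range:
  assumes "acyclic_S3S3_colouring (Gm_V m) (Gm_E m) col" "s < m"
  shows "col (canon m s v) \<in> {1, 2}"
  using assms canon_in_Gm_V unfolding acyclic_S3S3_colouring_def by blast

text \<open>For m = 1 the copy of x' is x itself, so canon m s is injective only on vertex sets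
  of F avoiding x or x'.\<close>

lemma copy_no_alternating_cycle:
  assumes col: "acyclic_S3S3_colouring (Gm_V m) (Gm_E m) col" and s: "s < m"
    and cs: "3 \<le> length cs" "distinct cs" "\<not> (Fx \<in> set cs \<and> Fx' \<in> set cs)"
      "\<forall>i < length cs. F_adj (cs ! i) (cs ! ((i + 1) mod length cs))"
  shows "\<exists>i < length cs. col (canon m s (cs ! i)) = col (canon m s (cs ! ((i + 1) mod length cs)))"
proof -
  have "inj_on (canon m s) (set cs)"
    using cs(3) by (intro inj_onI) (auto simp: canon_def split: if_splits)
  moreover have "\<forall>i < length cs.
      adj (Gm_E m) (canon m s (cs ! i)) (canon m s (cs ! ((i + 1) mod length cs)))"
    using cs(4) s adj_canon by blast
  moreover have pos: "0 < length cs"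
    using cs(1) by linarith
  ultimately have "is_cycle (Gm_V m) (Gm_E m) (map (canon m s) cs)"
    using cs s by (auto simp: is_cycle_def distinct_map canon_in_Gm_V)
  from no_alternating_cycle[OF col this] show ?thesis
    using pos by auto
qed

lemma all_less_4: "(\<forall>i::nat < 4. P i) \<longleftrightarrow> P 0 \<and> P 1 \<and> P 2 \<and> P 3"
  by (simp add: numeral_eq_Suc All_less_Suc2)

lemma ex_less_4: "(\<exists>i::nat < 4. P i) \<longleftrightarrow> P 0 \<or> P 1 \<or> P 2 \<or> P 3"
  by (simp add: numeral_eq_Suc Ex_less_Suc2)

lemma all_less_6: "(\<forall>i::nat < 6. P i) \<longleftrightarrow> P 0 \<and> P 1 \<and> P 2 \<and> P 3 \<and> P 4 \<and> P 5"
  by (simp add: numeral_eq_Suc All_less_Suc2)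

lemma ex_less_6: "(\<exists>i::nat < 6. P i) \<longleftrightarrow> P 0 \<or> P 1 \<or> P 2 \<or> P 3 \<or> P 4 \<or> P 5"
  by (simp add: numeral_eq_Suc Ex_less_Suc2)

lemma copy_no_alternating_4cycle:
  assumes "acyclic_S3S3_colouring (Gm_V m) (Gm_E m) col" "s < m"
    and "distinct [p, q, r, t]" "\<not> (Fx \<in> {p, q, r, t} \<and> Fx' \<in> {p, q, r, t})"
    and "F_adj p q" "F_adj q r" "F_adj r t" "F_adj t p"
  shows "col (canon m s p) = col (canon m s q) \<or> col (canon m s q) = col (canon m s r) \<or>
    col (canon m s r) = col (canon m s t) \<or> col (canon m s t) = col (canon m s p)"
proof -
  let ?cs = "[p, q, r, t]"
  have len: "length ?cs = 4"
    by simp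
  have "\<exists>i < 4. col (canon m s (?cs ! i)) = col (canon m s (?cs ! ((i + 1) mod 4)))"
  proof (rule copy_no_alternating_cycle[OF assms(1,2), of ?cs, unfolded len])
    show "\<forall>i < 4. F_adj (?cs ! i) (?cs ! ((i + 1) mod 4))"
      using assms(5-8) unfolding all_less_4 by simp
  qed (use assms(3,4) in simp_all)
  then show ?thesis
    unfolding ex_less_4 by simp
qed

lemma copy_no_alternating_6cycle:
  assumes "acyclic_S3S3_colouring (Gm_V m) (Gm_E m) col" "s < m"
    and "distinct [p1, p2, p3, p4, p5, p6]" "Fx' \<notin> {p1, p2, p3, p4, p5, p6}"
    and "F_adj p1 p2" "F_adj p2 p3" "F_adj p3 p4" "F_adj p4 p5" "F_adj p5 p6" "F_adj p6 p1"
  shows "col (canon m s p1) = col (canon m s p2) \<or> col (canon m s p2) = col (canon m s p3) \<or>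
    col (canon m s p3) = col (canon m s p4) \<or> col (canon m s p4) = col (canon m s p5) \<or>
    col (canon m s p5) = col (canon m s p6) \<or> col (canon m s p6) = col (canon m s p1)"
proof -
  let ?cs = "[p1, p2, p3, p4, p5, p6]"
  have len: "length ?cs = 6"
    by simp
  have "\<exists>i < 6. col (canon m s (?cs ! i)) = col (canon m s (?cs ! ((i + 1) mod 6)))"
  proof (rule copy_no_alternating_cycle[OF assms(1,2), of ?cs, unfolded len])
    show "\<forall>i < 6. F_adj (?cs ! i) (?cs ! ((i + 1) mod 6))"
      using assms(5-10) unfolding all_less_6 by simp
  qed (use assms(3,4) in simp_all)
  then show ?thesis
    unfolding ex_less_6 by simp
qed

lemma copy_not_four_same_colour_nbrs:
  assumes col: "acyclic_S3S3_colouring (Gm_V m) (Gm_E m) col" and s: "s < m"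
    and "distinct [u1, u2, u3, u4]" "F_adj v u1" "F_adj v u2" "F_adj v u3" "F_adj v u4"
  shows "\<not> (col (canon m s u1) = col (canon m s v) \<and> col (canon m s u2) = col (canon m s v) \<and>
    col (canon m s u3) = col (canon m s v) \<and> col (canon m s u4) = col (canon m s v))"
proof
  let ?U = "{u1, u2, u3, u4}"
  assume same: "col (canon m s u1) = col (canon m s v) \<and> col (canon m s u2) = col (canon m s v) \<and>
    col (canon m s u3) = col (canon m s v) \<and> col (canon m s u4) = col (canon m s v)"
  have "inj_on (canon m s) ?U"
    using assms(3-) F_adj_not_both_x_x'[of v]
    by (intro inj_onI) (auto simp: canon_def split: if_splits)
  then have "card (canon m s ` ?U) = 4"
    using assms(3) by (simp add: card_image)
  moreover have "card (canon m s ` ?U) \<le> 3"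
    using same assms(4-7) s
    by (intro same_colour_nbrs_card_le[OF col finite_Gm_V canon_in_Gm_V[OF s]])
       (auto simp: canon_in_Gm_V adj_canon)
  ultimately show False by simp
qed

section \<open>The colouring of each copy is forced\<close>

lemma copy_triangle_monochromatic:
  assumes col: "acyclic_S3S3_colouring (Gm_V m) (Gm_E m) col" and s: "s < m"
  shows "col (canon m s Fa) = col (canon m s Fc) \<and> col (canon m s Fc) = col (canon m s Fd)"
proof -
  define K where "K v = col (canon m s v)" for v
  have same: "K u = K v \<longleftrightarrow> (K u = 1 \<longleftrightarrow> K v = 1)" for u v
    using copy_colour_range[OF col s, of u] copy_colour_range[OF col s, of v] by (auto simp: K_def)
  note cycle = copy_no_alternating_4cycle[OF col s, folded K_def]
  note nbrs = copy_not_four_same_colour_nbrs[OF col s, folded K_def]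
  show ?thesis
    unfolding K_def[symmetric]
  proof (rule ccontr)
    assume "\<not> (K Fa = K Fc \<and> K Fc = K Fd)"
    then consider "K Fa \<noteq> K Fc" "K Fc = K Fd" | "K Fc \<noteq> K Fa" "K Fa = K Fd"
      | "K Fd \<noteq> K Fa" "K Fa = K Fc"
      unfolding same by blast
    then show False
    proof cases
      case 1
      have "K Fe = K Fc" "K Fb = K Fc"
        using 1 cycle[of Fa Fc Fe Fd] cycle[of Fa Fc Fb Fd] by (auto simp: F_adj_def F_edges_def same)
      moreover have "K Fg \<noteq> K Fc"
        using nbrs[of Fb Fd Fe Fg Fc] 1 calculation by (auto simp: F_adj_def F_edges_def)
      ultimately show False
        using 1 cycle[of Fa Fb Fg Fc] by (auto simp: F_adj_def F_edges_def same)
    next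
      case 2
      have "K Fe = K Fa" "K Fb = K Fa"
        using 2 cycle[of Fc Fa Fe Fd] cycle[of Fc Fa Fb Fd] by (auto simp: F_adj_def F_edges_def same)
      moreover have "K Fg \<noteq> K Fa \<or> K Fx' \<noteq> K Fa"
        using nbrs[of Fa Fd Fg Fx' Fb] 2 calculation by (auto simp: F_adj_def F_edges_def)
      ultimately show False
        using 2 cycle[of Fb Fg Fe Fc] cycle[of Fb Fx' Fe Fc] by (auto simp: F_adj_def F_edges_def same)
    next
      case 3
      have "K Fe = K Fa" "K Fb = K Fa"
        using 3 cycle[of Fd Fa Fe Fc] cycle[of Fd Fa Fb Fc] by (auto simp: F_adj_def F_edges_def same)
      moreover have "K Fg \<noteq> K Fa"
        using nbrs[of Fa Fb Fe Fg Fc] 3 calculation by (auto simp: F_adj_def F_edges_def)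
      ultimately show False
        using 3 cycle[of Fb Fg Fc Fd] by (auto simp: F_adj_def F_edges_def same)
    qed
  qed
qed

lemma copy_colouring_pattern:
  assumes col: "acyclic_S3S3_colouring (Gm_V m) (Gm_E m) col" and s: "s < m"
  shows "(col (canon m s Fb) = col (canon m s Fa)) \<noteq> (col (canon m s Fe) = col (canon m s Fa))"
    and "col (canon m s Fh) \<noteq> col (canon m s Fa)" "col (canon m s Fi) \<noteq> col (canon m s Fa)"
    and "col (canon m s Fx) \<noteq> col (canon m s Fa)" "col (canon m s Fx') \<noteq> col (canon m s Fa)"
proof -
  define K where "K v = col (canon m s v)" for v
  have triangle: "K Fc = K Fa" "K Fd = K Fa"
    using copy_triangle_monochromatic[OF col s] by (simp_all add: K_def)
  note cycle4 = copy_no_alternating_4cycle[OF col s, folded K_def]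
  note cycle6 = copy_no_alternating_6cycle[OF col s, folded K_def]
  note nbrs = copy_not_four_same_colour_nbrs[OF col s, folded K_def]
  have be: "(K Fb = K Fa) \<noteq> (K Fe = K Fa)"
    using nbrs[of Fb Fc Fd Fe Fa] cycle4[of Fa Fb Fd Fe] triangle
    by (auto simp: F_adj_def F_edges_def)
  have h: "K Fh \<noteq> K Fa"
    using be nbrs[of Fb Fc Fd Fh Fa] nbrs[of Fc Fd Fe Fh Fa] triangle
    by (auto simp: F_adj_def F_edges_def)
  have i: "K Fi \<noteq> K Fa"
    using be nbrs[of Fa Fb Fc Fi Fd] nbrs[of Fa Fc Fe Fi Fd] triangle
    by (auto simp: F_adj_def F_edges_def)
  have "K Fa = K Fh \<or> K Fh = K Fx \<or> K Fx = K Fi \<or> K Fi = K Fd \<or> K Fd = K Fb \<or> K Fb = K Fa"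
    by (rule cycle6) (simp_all add: F_adj_def F_edges_def)
  moreover have "K Fa = K Fh \<or> K Fh = K Fx \<or> K Fx = K Fi \<or> K Fi = K Fd \<or> K Fd = K Fe \<or> K Fe = K Fa"
    by (rule cycle6) (simp_all add: F_adj_def F_edges_def)
  ultimately have x: "K Fx \<noteq> K Fa"
    using be h i triangle by metis
  have x': "K Fx' \<noteq> K Fa"
    using be nbrs[of Fa Fc Fd Fx' Fb] nbrs[of Fa Fc Fd Fx' Fe] triangle
    by (auto simp: F_adj_def F_edges_def)
  from be h i x x' show "(col (canon m s Fb) = col (canon m s Fa)) \<noteq> (col (canon m s Fe) = col (canon m s Fa))"
    and "col (canon m s Fh) \<noteq> col (canon m s Fa)" "col (canon m s Fi) \<noteq> col (canon m s Fa)"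
    and "col (canon m s Fx) \<noteq> col (canon m s Fa)" "col (canon m s Fx') \<noteq> col (canon m s Fa)"
    by (simp_all add: K_def)
qed

lemma two_valued_eq_iff_neq:
  fixes a b c :: nat
  assumes "a \<in> {1, 2}" "b \<in> {1, 2}" "c \<in> {1, 2}" "a \<noteq> c"
  shows "b = a \<longleftrightarrow> b \<noteq> c"
  using assms by auto

lemma copy_colour_eq_x_iff:
  assumes col: "acyclic_S3S3_colouring (Gm_V m) (Gm_E m) col" and s: "s < m"
  shows "col (canon m s v) = col (canon m s Fx) \<longleftrightarrow> col (canon m s v) \<noteq> col (canon m s Fa)"
  using copy_colour_range[OF col s] copy_colouring_pattern(4)[OF col s] by (intro two_valued_eq_iff_neq)

lemma copy_colours_relative_to_x:
  assumes col: "acyclic_S3S3_colouring (Gm_V m) (Gm_E m) col" and s: "s < m"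
  shows "col ((s + 1) mod m, Fx) = col (s, Fx)"
    and "col (s, Fh) = col (s, Fx)" "col (s, Fi) = col (s, Fx)"
    and "(col (s, Fe) = col (s, Fx)) \<noteq> (col (s, Fb) = col (s, Fx))"
  using copy_colour_eq_x_iff[OF col s, of Fx'] copy_colour_eq_x_iff[OF col s, of Fh]
    copy_colour_eq_x_iff[OF col s, of Fi] copy_colour_eq_x_iff[OF col s, of Fe]
    copy_colour_eq_x_iff[OF col s, of Fb] copy_colouring_pattern[OF col s]
  by (simp_all add: canon_def)

lemma mod_Suc_eq_imp_pred:
  assumes "t < m" "Suc t mod m = s"
  shows "t = (s + m - 1) mod m"
proof (cases "Suc t < m")
  case True
  then have "s + m - 1 = t + m"
    using assms(2) by simp
  then show ?thesis
    using assms(1) by simp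
next
  case False
  then have "Suc t = m"
    using assms(1) by simp
  then show ?thesis
    using assms(2) by auto
qed

lemma Suc_pred_mod:
  assumes "s < m"
  shows "Suc ((s + m - 1) mod m) mod m = s"
proof -
  have "Suc ((s + m - 1) mod m) mod m = Suc (s + m - 1) mod m"
    by (simp add: mod_Suc_eq)
  also have "Suc (s + m - 1) = s + m"
    using assms by simp
  finally show ?thesis
    using assms by simp
qed

definition Gm_nbrs :: "nat \<Rightarrow> nat \<Rightarrow> fv \<Rightarrow> (nat \<times> fv) list" where
  "Gm_nbrs m s v = (case v of
     Fa \<Rightarrow> [(s, Fd), (s, Fe), (s, Fc), (s, Fb), (s, Fh)]
   | Fb \<Rightarrow> [(s, Fd), (s, Fa), (s, Fc), (s, Fg), ((s + 1) mod m, Fx)]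
   | Fc \<Rightarrow> [(s, Fd), (s, Fe), (s, Fa), (s, Fg), (s, Fb)]
   | Fd \<Rightarrow> [(s, Fe), (s, Fa), (s, Fc), (s, Fb), (s, Fi)]
   | Fe \<Rightarrow> [(s, Fd), (s, Fa), (s, Fc), (s, Fg), ((s + 1) mod m, Fx)]
   | Fg \<Rightarrow> [(s, Fe), (s, Fc), (s, Fb)]
   | Fh \<Rightarrow> [(s, Fa), (s, Fx)]
   | Fi \<Rightarrow> [(s, Fd), (s, Fx)]
   | Fx \<Rightarrow> [(s, Fh), (s, Fi), ((s + m - 1) mod m, Fe), ((s + m - 1) mod m, Fb)]
   | Fx' \<Rightarrow> [])"

lemma adj_Gm_imp_nbrs:
  assumes "adj (Gm_E m) (s, v) q" "s < m"
  shows "q \<in> set (Gm_nbrs m s v)"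
proof -
  from assms(1) obtain t u u' where t: "t < m" and e: "(u, u') \<in> set F_edges"
    and eq: "{(s, v), q} = {canon m t u, canon m t u'}"
    unfolding adj_def Gm_E_def by blast
  then have "(s, v) = canon m t u \<and> q = canon m t u' \<or> (s, v) = canon m t u' \<and> q = canon m t u"
    by (auto simp: doubleton_eq_iff)
  then show ?thesis
    using e t by (auto simp: F_edges_def canon_def Gm_nbrs_def dest: mod_Suc_eq_imp_pred)
qed

lemma x_saturated:
  assumes col: "acyclic_S3S3_colouring (Gm_V m) (Gm_E m) col" and s: "s < m"
  shows "same_deg (Gm_V m) (Gm_E m) col (s, Fx) = 3"
proof -
  define p where "p = (s + m - 1) mod m"
  have p: "p < m" "(p + 1) mod m = s"
    using s Suc_pred_mod[OF s] by (simp_all add: p_def)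
  have nbrs: "adj (Gm_E m) (s, Fx) q \<longleftrightarrow> q \<in> {(s, Fh), (s, Fi), (p, Fe), (p, Fb)}" for q
  proof
    show "adj (Gm_E m) (s, Fx) q \<Longrightarrow> q \<in> {(s, Fh), (s, Fi), (p, Fe), (p, Fb)}"
      using adj_Gm_imp_nbrs[of m s Fx q] s by (simp add: Gm_nbrs_def p_def)
    show "q \<in> {(s, Fh), (s, Fi), (p, Fe), (p, Fb)} \<Longrightarrow> adj (Gm_E m) (s, Fx) q"
      using adj_canon[OF s, of Fx Fh] adj_canon[OF s, of Fx Fi]
        adj_canon[OF p(1), of Fx' Fe] adj_canon[OF p(1), of Fx' Fb] p(2)
      by (auto simp: F_adj_def F_edges_def canon_def)
  qed
  have own: "col (s, Fh) = col (s, Fx)" "col (s, Fi) = col (s, Fx)"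
    using copy_colours_relative_to_x[OF col s] by auto
  have pred: "(col (p, Fe) = col (s, Fx)) \<noteq> (col (p, Fb) = col (s, Fx))"
    using copy_colours_relative_to_x[OF col p(1)] p(2) by auto
  have "{u \<in> Gm_V m. adj (Gm_E m) (s, Fx) u \<and> col u = col (s, Fx)} =
      (if col (p, Fe) = col (s, Fx) then {(s, Fh), (s, Fi), (p, Fe)} else {(s, Fh), (s, Fi), (p, Fb)})"
    using own pred s p by (auto simp: nbrs Gm_V_def)
  then show ?thesis
    unfolding same_deg_def by simp
qed

lemma x_colours_equal:
  assumes col: "acyclic_S3S3_colouring (Gm_V m) (Gm_E m) col"
  shows "s < m \<Longrightarrow> col (s, Fx) = col (0, Fx)"
proof (induction s)
  case (Suc s)
  then show ?case
    using copy_colours_relative_to_x(1)[OF col, of s] by simp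
qed simp

section \<open>An acyclic colouring\<close>

definition abcd_colouring :: "nat \<times> fv \<Rightarrow> nat" where
  "abcd_colouring v = (if snd v \<in> {Fa, Fb, Fc, Fd} then 1 else 2)"

lemma abcd_colouring_same_deg:
  assumes "(s, v) \<in> Gm_V m"
  shows "same_deg (Gm_V m) (Gm_E m) abcd_colouring (s, v) \<le> 3"
proof -
  have s: "s < m"
    using assms by (simp add: Gm_V_def)
  have "{u \<in> Gm_V m. adj (Gm_E m) (s, v) u \<and> abcd_colouring u = abcd_colouring (s, v)} \<subseteq>
      {u \<in> set (Gm_nbrs m s v). abcd_colouring u = abcd_colouring (s, v)}"
    using adj_Gm_imp_nbrs[of m s v] s by blast
  then have "same_deg (Gm_V m) (Gm_E m) abcd_colouring (s, v) \<le>
      card {u \<in> set (Gm_nbrs m s v). abcd_colouring u = abcd_colouring (s, v)}"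
    unfolding same_deg_def by (intro card_mono) auto
  also have "\<dots> = card (set (filter (\<lambda>u. abcd_colouring u = abcd_colouring (s, v)) (Gm_nbrs m s v)))"
    by (simp add: set_filter)
  also have "\<dots> \<le> length (filter (\<lambda>u. abcd_colouring u = abcd_colouring (s, v)) (Gm_nbrs m s v))"
    by (rule card_length)
  also have "\<dots> \<le> 3"
    by (cases v) (simp_all add: Gm_nbrs_def abcd_colouring_def)
  finally show ?thesis .
qed

text \<open>Every vertex has at most one bichromatic neighbour whose rank is at least its own, so a
  vertex of least rank on a bichromatic cycle cannot have two neighbours on the cycle.\<close>

definition peel_rank :: "fv \<Rightarrow> nat" where
  "peel_rank v = (case v of Fe \<Rightarrow> 4 | Fc \<Rightarrow> 3 | Fg \<Rightarrow> 2 | Fa \<Rightarrow> 1 | Fb \<Rightarrow> 1 | Fd \<Rightarrow> 1 | _ \<Rightarrow> 0)"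

lemma abcd_colouring_bichromatic_nbr_unique:
  assumes "u \<in> set (Gm_nbrs m s v)" "u' \<in> set (Gm_nbrs m s v)"
    and "abcd_colouring u \<noteq> abcd_colouring (s, v)" "abcd_colouring u' \<noteq> abcd_colouring (s, v)"
    and "peel_rank v \<le> peel_rank (snd u)" "peel_rank v \<le> peel_rank (snd u')"
  shows "u = u'"
  using assms by (cases v) (auto simp: Gm_nbrs_def abcd_colouring_def peel_rank_def)

lemma abcd_colouring_no_bichromatic_cycle:
  assumes cycle: "is_cycle (Gm_V m) (Gm_E m) cs"
  shows "\<exists>i < length cs. abcd_colouring (cs ! i) = abcd_colouring (cs ! ((i + 1) mod length cs))"
proof (rule ccontr)
  assume "\<not> ?thesis"
  then have bichromatic: "\<forall>i < length cs.
      abcd_colouring (cs ! i) \<noteq> abcd_colouring (cs ! ((i + 1) mod length cs))"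
    by simp
  have ne: "set cs \<noteq> {}" and sub: "set cs \<subseteq> Gm_V m"
    using cycle by (auto simp: is_cycle_def)
  define v where "v = arg_min_on (peel_rank \<circ> snd) (set cs)"
  have v: "v \<in> set cs"
    unfolding v_def using arg_min_if_finite(1)[OF finite_set ne] .
  have least: "peel_rank (snd v) \<le> peel_rank (snd u)" if "u \<in> set cs" for u
    using arg_min_least[OF finite_set ne that, of "peel_rank \<circ> snd"] by (simp add: v_def)
  obtain t T where vT: "v = (t, T)" "t < m"
    using v sub by (cases v) (auto simp: Gm_V_def)
  obtain u u' where u: "u \<in> set cs" "u' \<in> set cs" "u \<noteq> u'"
    and adj: "adj (Gm_E m) v u" "adj (Gm_E m) v u'"
    and colour: "abcd_colouring u \<noteq> abcd_colouring v" "abcd_colouring u' \<noteq> abcd_colouring v"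
    using bichromatic_cycle_nbrs[OF cycle bichromatic v] by blast
  have "u \<in> set (Gm_nbrs m t T)" "u' \<in> set (Gm_nbrs m t T)"
    using adj vT adj_Gm_imp_nbrs by auto
  then have "u = u'"
    using colour least[OF u(1)] least[OF u(2)] vT
    by (intro abcd_colouring_bichromatic_nbr_unique) auto
  with u(3) show False ..
qed

lemma abcd_colouring_acyclic: "acyclic_S3S3_colouring (Gm_V m) (Gm_E m) abcd_colouring"
  unfolding acyclic_S3S3_colouring_def
  using abcd_colouring_same_deg abcd_colouring_no_bichromatic_cycle
  by (auto simp: abcd_colouring_def)

theorem mainTheorem9:
  fixes m :: nat
  assumes "m \<ge> 1"
  shows "(\<exists>c. acyclic_S3S3_colouring (Gm_V m) (Gm_E m) c) \<and>
         (\<forall>c. acyclic_S3S3_colouring (Gm_V m) (Gm_E m) c \<longrightarrow>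
            (\<forall>s \<in> {1..m}. \<forall>t \<in> {1..m}. c (w s) = c (w t)) \<and>
            (\<forall>s \<in> {1..m}. saturated3 (Gm_V m) (Gm_E m) c (w s)))"
proof (intro conjI allI impI)
  show "\<exists>c. acyclic_S3S3_colouring (Gm_V m) (Gm_E m) c"
    using abcd_colouring_acyclic by blast
next
  fix c
  assume c: "acyclic_S3S3_colouring (Gm_V m) (Gm_E m) c"
  have w_copy: "w s = (s - 1, Fx)" "s - 1 < m" if "s \<in> {1..m}" for s
    using that by (auto simp: w_def)
  show "\<forall>s \<in> {1..m}. \<forall>t \<in> {1..m}. c (w s) = c (w t)"
    using w_copy x_colours_equal[OF c] by metis
  show "\<forall>s \<in> {1..m}. saturated3 (Gm_V m) (Gm_E m) c (w s)"
    using w_copy x_saturated[OF c] by (simp add: saturated3_def)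
qed

end
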